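(* For each $i\in\{1,2,3\}$, $P_i'=2P_i''-M$, i.e. $P_i''$ is the midpoint of $MP_i'$. Hence $T'=P_1'P_2'P_3'$ is the image of $T''=P_1''P_2''P_3''$ under the homothety with center $M$ and ratio $2$, and the area of $T''$ equals $\frac{27\sqrt3}{64}\frac{c^4}{ab}$ (one quarter of the area of $T'$), independent of $u$.
   Context: Let $a>b>0$ and $c>0$ with $c^2=a^2-b^2$. Let $\mathcal{E}$ be the ellipse $x^2/a^2+y^2/b^2=1$, parametrized by $P(t)=(a\cos t,b\sin t)$. Fix $u\in\mathbb{R}$, let $M=(a\cos u,b\sin u)$ and $\Delta_u(t)=(x_u(t),y_u(t))$, where $x_u(t)=\frac1a\big(c^2(1+\cos(t+u))\cos t-a^2\cos u\big)$ and $y_u(t)=\frac1b\big(c^2\cos t\sin(t+u)-c^2\sin t-a^2\sin u\big)$ (the negative pedal curve of $\mathcal{E}$ with respect to $M$). For $i=1,2,3$ let $t_i=-u/3-2\pi(i-1)/3$, $P_i'=\Delta_u(t_i)$ (the cusps), and $P_i''=\left(\frac{c^2\cos^3 t_i}{a},-\frac{c^2\sin^3 t_i}{b}\right)$ (the center of curvature of $\mathcal{E}$ at $P(t_i)$). *)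

theory Defs
  imports "HOL-Analysis.Analysis"
begin

text \<open>Negative pedal curve Delta_u of the ellipse x^2/a^2+y^2/b^2=1 w.r.t. M = (a cos u, b sin u);
  here c2 stands for c^2 = a^2 - b^2.\<close>
definition neg_pedal :: "real \<Rightarrow> real \<Rightarrow> real \<Rightarrow> real \<Rightarrow> real \<Rightarrow> real \<times> real" where
  "neg_pedal a b c u t =
     ((c^2 * (1 + cos (t + u)) * cos t - a^2 * cos u) / a,
      (c^2 * cos t * sin (t + u) - c^2 * sin t - a^2 * sin u) / b)"

definition ell_point :: "real \<Rightarrow> real \<Rightarrow> real \<Rightarrow> real \<times> real" where
  "ell_point a b t = (a * cos t, b * sin t)"

definition cusp_param :: "real \<Rightarrow> nat \<Rightarrow> real" where
  "cusp_param u i = - u / 3 - 2 * pi * (real i - 1) / 3"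

definition curv_center :: "real \<Rightarrow> real \<Rightarrow> real \<Rightarrow> real \<Rightarrow> real \<times> real" where
  "curv_center a b c t = (c^2 * (cos t)^3 / a, - (c^2 * (sin t)^3 / b))"

definition tri_area :: "real \<times> real \<Rightarrow> real \<times> real \<Rightarrow> real \<times> real \<Rightarrow> real" where
  "tri_area p q r = \<bar>(fst q - fst p) * (snd r - snd p) - (fst r - fst p) * (snd q - snd p)\<bar> / 2"

end

theory Submission
  imports Defs
begin

text \<open>At a cusp parameter t one has 3t = -u (mod 2 pi), so the triple-angle formulas turn
  cos(t)^3 and sin(t)^3 into affine expressions in cos t and sin t.  Substituting them shows that
  the cusp of the negative pedal curve is the reflection of M in the centre of curvature.  They
  also show that the three centres of curvature are the image of the equilateral triangle
  inscribed in the unit circle at the angles t_i under the map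
  (x, y) \<mapsto> (3c^2/(4a) x, -3c^2/(4b) y) followed by a translation, so their area is
  9c^4/(16ab) times 3 sqrt 3/4, whatever u is.\<close>

lemma sin_treble_sin: "sin (3 * x) = 3 * sin x - 4 * sin x ^ 3" for x :: real
proof -
  have "sin (3 * x) = sin (2 * x + x)" by simp
  also have "\<dots> = 3 * sin x - 4 * sin x ^ 3"
    unfolding sin_add sin_double cos_double using sin_cos_squared_add[of x] by algebra
  finally show ?thesis .
qed

lemma cos_cube: "cos x ^ 3 = (3 * cos x + cos (3 * x)) / 4" for x :: real
  by (simp add: cos_treble_cos)

lemma sin_cube: "sin x ^ 3 = (3 * sin x - sin (3 * x)) / 4" for x :: real
  by (simp add: sin_treble_sin)

lemma tri_area_diag_affine:
  "tri_area (\<alpha> * x1 + p, \<beta> * y1 + q) (\<alpha> * x2 + p, \<beta> * y2 + q) (\<alpha> * x3 + p, \<beta> * y3 + q)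
     = \<bar>\<alpha> * \<beta>\<bar> * tri_area (x1, y1) (x2, y2) (x3, y3)"
proof -
  have "(\<alpha> * x2 + p - (\<alpha> * x1 + p)) * (\<beta> * y3 + q - (\<beta> * y1 + q))
        - (\<alpha> * x3 + p - (\<alpha> * x1 + p)) * (\<beta> * y2 + q - (\<beta> * y1 + q))
      = (\<alpha> * \<beta>) * ((x2 - x1) * (y3 - y1) - (x3 - x1) * (y2 - y1))"
    by algebra
  then show ?thesis unfolding tri_area_def by (simp add: abs_mult)
qed

lemma tri_area_homothety:
  "tri_area (k *\<^sub>R P - m) (k *\<^sub>R Q - m) (k *\<^sub>R R - m) = k\<^sup>2 * tri_area P Q R"
  using tri_area_diag_affine[of k "fst P" "- fst m" k "snd P" "- snd m"
      "fst Q" "snd Q" "fst R" "snd R"]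
  by (cases P, cases Q, cases R, cases m) (simp add: power2_eq_square)

lemma tri_area_unit_circle_equilateral:
  "tri_area (cos t, sin t) (cos (t - 2 * pi / 3), sin (t - 2 * pi / 3))
     (cos (t - 4 * pi / 3), sin (t - 4 * pi / 3)) = 3 * sqrt 3 / 4"
proof -
  have "cos (4 * pi / 3) = - 1 / 2" "sin (4 * pi / 3) = - sqrt 3 / 2"
    using cos_add[of "pi / 3" pi] sin_add[of "pi / 3" pi] by (simp_all add: cos_60 sin_60)
  moreover have "cos (2 * pi / 3) = - 1 / 2" "sin (2 * pi / 3) = sqrt 3 / 2"
    by (simp_all add: cos_120 sin_120)
  moreover have "(sqrt 3)\<^sup>2 = 3" "(sin t)\<^sup>2 + (cos t)\<^sup>2 = 1" by simp_all
  ultimately have "(cos (t - 2 * pi / 3) - cos t) * (sin (t - 4 * pi / 3) - sin t)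
        - (cos (t - 4 * pi / 3) - cos t) * (sin (t - 2 * pi / 3) - sin t) = - 3 * sqrt 3 / 2"
    unfolding cos_diff sin_diff by algebra
  then show ?thesis unfolding tri_area_def by simp
qed

lemma cusp_param_triple:
  "cos (3 * cusp_param u i) = cos u" "sin (3 * cusp_param u i) = - sin u"
proof -
  have "3 * cusp_param u i = (2 * pi - u) - 2 * real i * pi"
    unfolding cusp_param_def by (simp add: field_simps)
  then show "cos (3 * cusp_param u i) = cos u" "sin (3 * cusp_param u i) = - sin u"
    by (simp_all add: cos_diff sin_diff)
qed

lemma cusp_param_shift:
  "cusp_param u 2 = cusp_param u 1 - 2 * pi / 3" "cusp_param u 3 = cusp_param u 1 - 4 * pi / 3"
  unfolding cusp_param_def by simp_all

lemma curv_center_at_triple: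
  assumes "cos (3 * t) = cos u" "sin (3 * t) = - sin u"
  shows "curv_center a b c t
    = (3 * c\<^sup>2 / (4 * a) * cos t + c\<^sup>2 * cos u / (4 * a),
       - (3 * c\<^sup>2 / (4 * b)) * sin t + - (c\<^sup>2 * sin u / (4 * b)))"
  unfolding curv_center_def cos_cube[of t] sin_cube[of t] assms
  by (simp add: algebra_simps add_divide_distrib)

lemma neg_pedal_at_triple:
  assumes "a \<noteq> 0" "b \<noteq> 0" "c\<^sup>2 = a\<^sup>2 - b\<^sup>2"
    and "cos (3 * t) = cos u" "sin (3 * t) = - sin u"
  shows "neg_pedal a b c u t = 2 *\<^sub>R curv_center a b c t - ell_point a b u"
proof -
  have cu: "cos u = 4 * cos t ^ 3 - 3 * cos t" and su: "sin u = 4 * sin t ^ 3 - 3 * sin t"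
    using assms(4,5) cos_treble_cos[of t] sin_treble_sin[of t] by simp_all
  have sc: "(sin t)\<^sup>2 + (cos t)\<^sup>2 = 1" by simp
  have x: "c\<^sup>2 * (1 + cos (t + u)) * cos t = 2 * c\<^sup>2 * cos t ^ 3"
    unfolding cos_add cu su using sc by algebra
  have y: "c\<^sup>2 * cos t * sin (t + u) - c\<^sup>2 * sin t - a\<^sup>2 * sin u = - 2 * c\<^sup>2 * sin t ^ 3 - b\<^sup>2 * sin u"
    unfolding sin_add cu su using sc assms(3) by algebra
  show ?thesis
    using assms(1,2) unfolding neg_pedal_def curv_center_def ell_point_def x y
    by (simp add: field_simps power2_eq_square)
qed

theorem proposition7p1:
  fixes a b c u :: real
  assumes "a > b" "b > 0" "c > 0" "c^2 = a^2 - b^2"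
  defines "M \<equiv> ell_point a b u"
  defines "P' \<equiv> (\<lambda>i. neg_pedal a b c u (cusp_param u i))"
  defines "P'' \<equiv> (\<lambda>i. curv_center a b c (cusp_param u i))"
  shows "(\<forall>i\<in>{1,2,3::nat}. P' i = 2 *\<^sub>R P'' i - M)
    \<and> tri_area (P'' 1) (P'' 2) (P'' 3) = 27 * sqrt 3 / 64 * c^4 / (a * b)
    \<and> tri_area (P'' 1) (P'' 2) (P'' 3) = tri_area (P' 1) (P' 2) (P' 3) / 4"
proof -
  have a: "a > 0" using assms(1,2) by linarith
  have cusp: "P' i = 2 *\<^sub>R P'' i - M" for i
    unfolding P'_def P''_def M_def
    using neg_pedal_at_triple[OF _ _ assms(4) cusp_param_triple] a assms(2) by simp
  define t where "t = cusp_param u 1"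
  have "tri_area (P'' 1) (P'' 2) (P'' 3)
      = \<bar>3 * c\<^sup>2 / (4 * a) * - (3 * c\<^sup>2 / (4 * b))\<bar>
        * tri_area (cos t, sin t) (cos (t - 2 * pi / 3), sin (t - 2 * pi / 3))
            (cos (t - 4 * pi / 3), sin (t - 4 * pi / 3))"
    unfolding P''_def curv_center_at_triple[OF cusp_param_triple] cusp_param_shift t_def
    by (rule tri_area_diag_affine)
  also have "\<dots> = \<bar>9 * c^4 / (16 * a * b)\<bar> * (3 * sqrt 3 / 4)"
    unfolding tri_area_unit_circle_equilateral by (simp add: power4_eq_xxxx power2_eq_square)
  also have "\<dots> = 27 * sqrt 3 / 64 * c^4 / (a * b)"
    using a assms(2) by simp
  finally show ?thesis
    using cusp tri_area_homothety[of 2 "P'' 1" M "P'' 2" "P'' 3"] by simp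
qed

end
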